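(* Let $a,b$ be integers with $b\ge 3$ and $a\ge 3b$. Then in the circulant graph $G_{a,b}$ the vertices $u=1$, $v=\lceil b/2\rceil$ and $w=b$ form an asteroidal triple.
   Context: For integers $a\ge 2b\ge 2$, $G_{a,b}$ is the graph with vertex set $\{0,1,\ldots,a-1\}$ in which distinct $u,v$ are adjacent if and only if $u\in\{v+b,v+b+1,\ldots,v+a-b\}$ with addition modulo $a$. Three vertices $u,v,w$ of a graph $G$ form an asteroidal triple if there exist paths $P_{uv}$ (from $u$ to $v$), $P_{vw}$ and $P_{wu}$ in $G$ such that $N_G(w)\cap V(P_{uv})=\emptyset$, $N_G(u)\cap V(P_{vw})=\emptyset$ and $N_G(v)\cap V(P_{wu})=\emptyset$, where $N_G(x)$ is the neighborhood of $x$. *)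

theory Defs
  imports Complex_Main
begin

definition is_path :: "'v set \<Rightarrow> ('v \<Rightarrow> 'v \<Rightarrow> bool) \<Rightarrow> 'v list \<Rightarrow> 'v \<Rightarrow> 'v \<Rightarrow> bool" where
  "is_path V E p x y \<longleftrightarrow> p \<noteq> [] \<and> hd p = x \<and> last p = y \<and> set p \<subseteq> V \<and> distinct p \<and>
     (\<forall>i. Suc i < length p \<longrightarrow> E (p ! i) (p ! Suc i))"

definition nbhd :: "'v set \<Rightarrow> ('v \<Rightarrow> 'v \<Rightarrow> bool) \<Rightarrow> 'v \<Rightarrow> 'v set" where
  "nbhd V E x = {y \<in> V. E x y}"

definition asteroidal_triple :: "'v set \<Rightarrow> ('v \<Rightarrow> 'v \<Rightarrow> bool) \<Rightarrow> 'v \<Rightarrow> 'v \<Rightarrow> 'v \<Rightarrow> bool" where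
  "asteroidal_triple V E u v w \<longleftrightarrow> u \<in> V \<and> v \<in> V \<and> w \<in> V \<and>
     (\<exists>Puv Pvw Pwu. is_path V E Puv u v \<and> is_path V E Pvw v w \<and> is_path V E Pwu w u \<and>
        nbhd V E w \<inter> set Puv = {} \<and> nbhd V E u \<inter> set Pvw = {} \<and> nbhd V E v \<inter> set Pwu = {})"

definition G_vert :: "nat \<Rightarrow> nat set" where
  "G_vert a = {0..<a}"

definition G_adj :: "nat \<Rightarrow> nat \<Rightarrow> nat \<Rightarrow> nat \<Rightarrow> bool" where
  "G_adj a b u v \<longleftrightarrow> u \<in> G_vert a \<and> v \<in> G_vert a \<and> u \<noteq> v \<and>
     (\<exists>k. b \<le> k \<and> k \<le> a - b \<and> u = (v + k) mod a)"

end

theory Submission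
  imports Defs
begin

text \<open>Write \<open>c = \<lceil>b/2\<rceil>\<close>. Adjacency in \<open>G\<^sub>a\<^sub>,\<^sub>b\<close> means that the circular
distance of two vertices lies in \<open>[b, a - b]\<close>; with \<open>a \<ge> 3b\<close> the walks
\<open>1, c + b, c\<close>, \<open>c, a - b + 2, b\<close> and \<open>b, 0, b + 1, 1\<close> avoid the neighbourhood of the
respective third vertex, because every vertex on them lies within distance \<open>b - 1\<close>
of that vertex or at distance more than \<open>a - b\<close> from it.\<close>

lemma G_adj_iff_abs_diff:
  assumes "0 < b"
  shows "G_adj a b x y \<longleftrightarrow> x < a \<and> y < a \<and>
           int b \<le> \<bar>int x - int y\<bar> \<and> \<bar>int x - int y\<bar> \<le> int a - int b"
proof
  assume adj: "G_adj a b x y"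
  then obtain k where k: "b \<le> k" "k \<le> a - b" "x = (y + k) mod a"
    and xy: "x < a" "y < a" by (auto simp: G_adj_def G_vert_def)
  show "x < a \<and> y < a \<and> int b \<le> \<bar>int x - int y\<bar> \<and> \<bar>int x - int y\<bar> \<le> int a - int b"
  proof (cases "y + k < a")
    case True
    then have "x = y + k" using k by simp
    then show ?thesis using k xy by auto
  next
    case False
    then have "x = y + k - a" using k xy by (simp add: le_mod_geq)
    then show ?thesis using k xy False by auto
  qed
next
  assume "x < a \<and> y < a \<and> int b \<le> \<bar>int x - int y\<bar> \<and> \<bar>int x - int y\<bar> \<le> int a - int b"
  then have xy: "x < a" "y < a" and dist: "int b \<le> \<bar>int x - int y\<bar>" "\<bar>int x - int y\<bar> \<le> int a - int b"
    by auto
  have "\<exists>k. b \<le> k \<and> k \<le> a - b \<and> x = (y + k) mod a"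
  proof (cases "y \<le> x")
    case True
    then show ?thesis using xy dist by (intro exI[of _ "x - y"]) auto
  next
    case False
    have "(y + (x + a - y)) mod a = x" using xy False by simp
    then show ?thesis using dist False by (intro exI[of _ "x + a - y"]) auto
  qed
  moreover have "x \<noteq> y" using dist assms by auto
  ultimately show "G_adj a b x y" using xy by (simp add: G_adj_def G_vert_def)
qed

lemma is_path_singleton: "is_path V E [x] u v \<longleftrightarrow> x = u \<and> x = v \<and> x \<in> V"
  by (auto simp: is_path_def)

lemma is_path_Cons_Cons:
  "is_path V E (x # y # p) u v \<longleftrightarrow>
     x = u \<and> x \<in> V \<and> x \<notin> set (y # p) \<and> E x y \<and> is_path V E (y # p) y v"
  by (auto simp: is_path_def nth_Cons less_Suc_eq_0_disj split: nat.splits)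

lemma nat_ceiling_half: "nat \<lceil>real b / 2\<rceil> = (b + 1) div 2"
proof -
  have "\<lceil>real b / 2\<rceil> = int ((b + 1) div 2)"
    by (rule ceiling_unique) (cases "even b"; auto elim!: evenE oddE simp: field_simps)+
  then show ?thesis by simp
qed

theorem mainTheorem6:
  fixes a b :: nat
  assumes "b \<ge> 3" and "a \<ge> 3 * b"
  shows "asteroidal_triple (G_vert a) (G_adj a b) 1 (nat \<lceil>real b / 2\<rceil>) b"
proof -
  define c where "c = (b + 1) div 2"
  have c: "2 \<le> c" "c + 1 \<le> b" "b \<le> 2 * c" using assms(1) by (auto simp: c_def)
  note adj = G_adj_iff_abs_diff[of b a]
  have "is_path (G_vert a) (G_adj a b) [1, c + b, c] 1 c"
    and "is_path (G_vert a) (G_adj a b) [c, a - b + 2, b] c b"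
    and "is_path (G_vert a) (G_adj a b) [b, 0, b + 1, 1] b 1"
    using c assms by (auto simp: is_path_Cons_Cons is_path_singleton adj G_vert_def)
  moreover have "nbhd (G_vert a) (G_adj a b) b \<inter> set [1, c + b, c] = {}"
    and "nbhd (G_vert a) (G_adj a b) 1 \<inter> set [c, a - b + 2, b] = {}"
    and "nbhd (G_vert a) (G_adj a b) c \<inter> set [b, 0, b + 1, 1] = {}"
    using c assms by (auto simp: nbhd_def adj)
  moreover have "1 \<in> G_vert a" "c \<in> G_vert a" "b \<in> G_vert a"
    using c assms by (auto simp: G_vert_def)
  ultimately show ?thesis
    unfolding nat_ceiling_half c_def[symmetric] asteroidal_triple_def by blast
qed

end
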